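(* Let $X \subset \mathbb{R}^{2n}$ be a symplectically self-polar convex body with $C^1$-smooth boundary, and let $T$ be the symplectic outer billiard map of $X$. Then for every $x\in\partial X$ the four points $$z_1=x+f(x),\quad z_2=-x+f(x),\quad z_3=-x-f(x),\quad z_4=x-f(x)$$ are the vertices of a parallelogram of symplectic area $4$, and they form a centrally symmetric closed orbit of $T$: $Tz_i=z_{i+1}$ for $i=1,\dots,4$, with $z_5=z_1$.
   Context: $\mathbb{R}^{2n}\cong\mathbb{C}^n$, $J$ is multiplication by $\sqrt{-1}$, $\omega(u,v)=\langle Ju,v\rangle$. For a convex body $X$ with origin in its interior, $X^\omega=\{y: \omega(x,y)\le 1\ \forall x\in X\}$; $X$ is symplectically self-polar if $X=X^\omega$ (such $X$ is centrally symmetric and, with $C^1$ boundary, strictly convex). For $C^1$ boundary, $f\colon\partial X\to\partial X^\omega$ assigns to $x$ the unique $f(x)\in X^\omega$ with $\omega(x,f(x))=1$. The characteristic line of $\partial X$ at $x$ is $\ker(\omega|_{T_x\partial X})$, spanned by $Jn(x)$ where $n(x)$ is the outer unit normal. Symplectic outer billiard map: for a strictly convex body $X$ with $C^1$ boundary and $z\in\mathbb{R}^{2n}\setminus X$, there is a unique $x\in\partial X$ such that the line through $z$ and $x$ is the characteristic line of $\partial X$ at $x$ and $\omega(x,x-z)>0$; then $T(z)=2x-z$. $T$ is a bijection of $\mathbb{R}^{2n}\setminus X$. *)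

theory Defs
  imports "HOL-Analysis.Analysis"
begin

text \<open>R^{2n} is identified with C^n, modelled as the type complex^'n
  (a euclidean space of real dimension 2n; its inner product is the real part
  of the Hermitian product).\<close>

definition cJ :: "complex ^ 'n \<Rightarrow> complex ^ 'n" where
  "cJ u = (\<chi> i. \<i> * (u $ i))"

definition omega :: "complex ^ 'n \<Rightarrow> complex ^ 'n \<Rightarrow> real" where
  "omega u v = inner (cJ u) v"

definition convex_body :: "'a::euclidean_space set \<Rightarrow> bool" where
  "convex_body X \<longleftrightarrow> compact X \<and> convex X \<and> interior X \<noteq> {}"

definition sym_polar :: "(complex ^ 'n) set \<Rightarrow> (complex ^ 'n) set" where
  "sym_polar X = {y. \<forall>x\<in>X. omega x y \<le> 1}"

definition sym_self_polar :: "(complex ^ 'n) set \<Rightarrow> bool" where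
  "sym_self_polar X \<longleftrightarrow> convex_body X \<and> 0 \<in> interior X \<and> X = sym_polar X"

definition C1_boundary :: "'a::euclidean_space set \<Rightarrow> bool" where
  "C1_boundary X \<longleftrightarrow> (\<forall>x\<in>frontier X. \<exists>U g G.
      open U \<and> x \<in> U \<and>
      (\<forall>y\<in>U. (g has_derivative (\<lambda>h. inner (G y) h)) (at y)) \<and>
      continuous_on U G \<and> G x \<noteq> 0 \<and>
      X \<inter> U = {y\<in>U. g y \<le> 0})"

definition outer_normal :: "'a::euclidean_space set \<Rightarrow> 'a \<Rightarrow> 'a" where
  "outer_normal X x = (THE nv. norm nv = 1 \<and> (\<forall>y\<in>X. inner nv (y - x) \<le> 0))"

definition polar_map :: "(complex ^ 'n) set \<Rightarrow> complex ^ 'n \<Rightarrow> complex ^ 'n" where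
  "polar_map X x = (THE y. y \<in> sym_polar X \<and> omega x y = 1)"

text \<open>Symplectic outer billiard map (meaningful for z outside X): reflect z in
  the unique boundary point x whose characteristic line passes through z, with
  omega(x, x - z) > 0.\<close>
definition outer_billiard :: "(complex ^ 'n) set \<Rightarrow> complex ^ 'n \<Rightarrow> complex ^ 'n" where
  "outer_billiard X z =
     (let x = (THE x. x \<in> frontier X \<and>
                 (\<exists>t::real. z - x = t *\<^sub>R cJ (outer_normal X x)) \<and>
                 omega x (x - z) > 0)
      in 2 *\<^sub>R x - z)"

end

theory Submission
  imports Defs
begin

text \<open>For a symplectically self-polar body, \<open>\<omega>(x, y) \<le> 1\<close> on \<open>X \<times> X\<close> and \<open>X = -X\<close>.
  Every boundary point \<open>p\<close> has a partner \<open>q \<in> X\<close> with \<open>\<omega>(p, q) = 1\<close>, and \<open>-Jq\<close> is then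
  an outer normal at \<open>p\<close>; a \<open>C\<^sup>1\<close> boundary has a single normal direction, so the partner
  is unique and the characteristic line at \<open>p\<close> is spanned by \<open>q\<close>.  Hence \<open>p - q\<close> lies
  on the characteristic line of \<open>p\<close> on the correct side, and \<open>T(p - q) = p + q\<close>; that no
  other boundary point qualifies follows again from \<open>\<omega> \<le> 1\<close>, and \<open>p - q \<notin> X\<close> because
  it would have the two partners \<open>p\<close> and \<open>q\<close>.  The four pairs
  \<open>(f, -x), (-x, -f), (-f, x), (x, f)\<close> with \<open>f = f(x)\<close> give the four steps of the orbit.\<close>

lemma cJ_nth: "cJ u $ i = \<i> * u $ i"
  by (simp add: cJ_def)

lemma cJ_add: "cJ (u + v) = cJ u + cJ v"
  by (simp add: vec_eq_iff cJ_nth distrib_left)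

lemma cJ_diff: "cJ (u - v) = cJ u - cJ v"
  by (simp add: vec_eq_iff cJ_nth right_diff_distrib)

lemma cJ_minus: "cJ (- u) = - cJ u"
  by (simp add: vec_eq_iff cJ_nth)

lemma cJ_scaleR: "cJ (r *\<^sub>R u) = r *\<^sub>R cJ u"
  by (simp add: vec_eq_iff cJ_nth scaleR_conv_of_real)

lemma cJ_cJ [simp]: "cJ (cJ u) = - u"
  by (simp add: vec_eq_iff cJ_nth)

lemma inner_cJ_left: "cJ u \<bullet> v = - (u \<bullet> cJ v)"
  by (simp add: inner_vec_def cJ_nth inner_complex_def sum_negf[symmetric] algebra_simps)

lemma inner_cJ_cJ [simp]: "cJ u \<bullet> cJ v = u \<bullet> v"
  by (simp add: inner_cJ_left)

lemma norm_cJ [simp]: "norm (cJ u) = norm u"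
  by (simp add: norm_eq_sqrt_inner)

lemma omega_antisym: "omega u v = - omega v u"
  unfolding omega_def by (metis inner_cJ_left inner_commute)

lemma inner_cJ_eq_omega: "cJ u \<bullet> v = - omega v u"
  using omega_antisym[of u v] by (simp add: omega_def)

lemma omega_self [simp]: "omega u u = 0"
  using omega_antisym[of u u] by simp

lemma omega_add_left [simp]: "omega (u + v) w = omega u w + omega v w"
  and omega_add_right [simp]: "omega w (u + v) = omega w u + omega w v"
  and omega_diff_left [simp]: "omega (u - v) w = omega u w - omega v w"
  and omega_diff_right [simp]: "omega w (u - v) = omega w u - omega w v"
  and omega_minus_left [simp]: "omega (- u) w = - omega u w"
  and omega_minus_right [simp]: "omega w (- u) = - omega w u"
  and omega_scaleR_left [simp]: "omega (r *\<^sub>R u) w = r * omega u w"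
  and omega_scaleR_right [simp]: "omega w (r *\<^sub>R u) = r * omega w u"
  by (simp_all add: omega_def cJ_add cJ_diff cJ_minus cJ_scaleR
      inner_add_left inner_add_right inner_diff_left inner_diff_right)

lemma omega_zero_right [simp]: "omega u 0 = 0"
  by (simp add: omega_def)

lemma omega_cJ_right [simp]: "omega u (cJ v) = u \<bullet> v"
  by (simp add: omega_def)

subsection \<open>Normals of bodies with \<open>C\<^sup>1\<close> boundary\<close>

lemma ray_of_open_halfspace:
  fixes a v :: "'a::euclidean_space"
  assumes "a \<noteq> 0" and "\<And>h. a \<bullet> h < 0 \<Longrightarrow> v \<bullet> h \<le> 0"
  shows "\<exists>c\<ge>0. v = c *\<^sub>R a"
proof -
  have "closure {h. a \<bullet> h < 0} \<subseteq> {h. v \<bullet> h \<le> 0}"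
    using assms(2) by (intro closure_minimal) (auto simp: closed_halfspace_le)
  then have le: "v \<bullet> h \<le> 0" if "a \<bullet> h \<le> 0" for h
    using that assms(1) by auto
  define c where "c = (v \<bullet> a) / (a \<bullet> a)"
  define w where "w = v - c *\<^sub>R a"
  have aw: "a \<bullet> w = 0"
    using assms(1) by (simp add: w_def c_def inner_diff_right inner_commute)
  have "v \<bullet> w = 0"
    using le[of w] le[of "- w"] aw by simp
  then have "w \<bullet> w = 0"
    using aw by (simp add: w_def inner_diff_left)
  then have "v = c *\<^sub>R a"
    by (simp add: w_def)
  moreover have "c \<ge> 0"
    using le[of "- a"] by (simp add: c_def inner_commute)
  ultimately show ?thesis by blast
qed

lemma descent_direction:
  fixes g :: "'a::euclidean_space \<Rightarrow> real"
  assumes "(g has_derivative (\<lambda>h. G \<bullet> h)) (at u)" and "G \<bullet> h < 0"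
    and "open U" "u \<in> U"
  shows "\<exists>t>0. u + t *\<^sub>R h \<in> U \<and> g (u + t *\<^sub>R h) < g u"
proof -
  have line: "((\<lambda>t::real. u + t *\<^sub>R h) has_derivative (\<lambda>t. t *\<^sub>R h)) (at 0)"
    by (auto intro!: derivative_eq_intros)
  have "(g has_derivative (\<lambda>h. G \<bullet> h)) (at (u + 0 *\<^sub>R h))"
    using assms(1) by simp
  from has_derivative_compose[OF line this]
  have "((\<lambda>t. g (u + t *\<^sub>R h)) has_real_derivative G \<bullet> h) (at 0)"
    by (simp add: has_field_derivative_def o_def mult_commute_abs)
  from DERIV_neg_dec_right[OF this assms(2)]
  have "\<forall>\<^sub>F t in at_right 0. g (u + t *\<^sub>R h) < g u"
    unfolding eventually_at_right_field by simp
  moreover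
  have "((\<lambda>t::real. u + t *\<^sub>R h) \<longlongrightarrow> u) (at_right 0)"
    by (intro tendsto_eq_intros) auto
  then have "\<forall>\<^sub>F t in at_right 0. u + t *\<^sub>R h \<in> U"
    using assms(3,4) by (rule topological_tendstoD)
  ultimately have "\<forall>\<^sub>F t in at_right 0. t > 0 \<and> u + t *\<^sub>R h \<in> U \<and> g (u + t *\<^sub>R h) < g u"
    using eventually_at_right_less[of "0::real"] by eventually_elim blast
  then show ?thesis
    using eventually_happens'[OF trivial_limit_at_right_real] by blast
qed

lemma C1_boundary_normal_cone_ray:
  fixes X :: "'a::euclidean_space set"
  assumes "C1_boundary X" "closed X" "u \<in> frontier X"
  obtains a where "a \<noteq> 0" "\<And>v. \<forall>y\<in>X. v \<bullet> (y - u) \<le> 0 \<Longrightarrow> \<exists>c\<ge>0. v = c *\<^sub>R a"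
proof -
  obtain U g G where U: "open U" "u \<in> U"
    and dg: "\<forall>y\<in>U. (g has_derivative (\<lambda>h. G y \<bullet> h)) (at y)"
    and G: "G u \<noteq> 0" and XU: "X \<inter> U = {y\<in>U. g y \<le> 0}"
    using assms(1)[unfolded C1_boundary_def, rule_format, OF assms(3)] by (elim exE conjE) blast
  have "u \<in> X"
    using assms(2,3) frontier_subset_closed by blast
  then have gu: "g u \<le> 0"
    using U(2) XU by blast
  have "\<exists>c\<ge>0. v = c *\<^sub>R G u" if v: "\<forall>y\<in>X. v \<bullet> (y - u) \<le> 0" for v
  proof (rule ray_of_open_halfspace[OF G])
    fix h
    assume "G u \<bullet> h < 0"
    with descent_direction[OF dg[rule_format, OF U(2)] _ U]
    obtain t where t: "t > 0" "u + t *\<^sub>R h \<in> U" "g (u + t *\<^sub>R h) < g u"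
      by blast
    then have "u + t *\<^sub>R h \<in> X"
      using gu XU by fastforce
    then have "v \<bullet> ((u + t *\<^sub>R h) - u) \<le> 0"
      using v by blast
    then have "t * (v \<bullet> h) \<le> 0"
      by simp
    then show "v \<bullet> h \<le> 0"
      using t(1) by (simp add: mult_le_0_iff)
  qed
  with G show thesis
    by (rule that)
qed

lemma outer_normal_eqI:
  assumes "C1_boundary X" "closed X" "u \<in> frontier X"
    and n: "norm n = 1" "\<forall>y\<in>X. n \<bullet> (y - u) \<le> 0"
  shows "outer_normal X u = n"
  unfolding outer_normal_def
proof (rule the_equality)
  show "norm n = 1 \<and> (\<forall>y\<in>X. n \<bullet> (y - u) \<le> 0)"
    using n by blast
next
  fix m
  assume m: "norm m = 1 \<and> (\<forall>y\<in>X. m \<bullet> (y - u) \<le> 0)"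
  obtain a where a: "a \<noteq> 0" "\<And>v. \<forall>y\<in>X. v \<bullet> (y - u) \<le> 0 \<Longrightarrow> \<exists>c\<ge>0. v = c *\<^sub>R a"
    using C1_boundary_normal_cone_ray assms(1-3) by blast
  obtain c d where "c \<ge> 0" "m = c *\<^sub>R a" "d \<ge> 0" "n = d *\<^sub>R a"
    using a(2) m n(2) by meson
  moreover from this have "c * norm a = d * norm a"
    using m n(1) by simp
  ultimately show "m = n"
    using a(1) by simp
qed

subsection \<open>Symplectically self-polar bodies\<close>

lemma sym_self_polar_mem_iff:
  assumes "sym_self_polar X"
  shows "y \<in> X \<longleftrightarrow> (\<forall>x\<in>X. omega x y \<le> 1)"
proof -
  have "y \<in> X \<longleftrightarrow> y \<in> sym_polar X"
    using assms unfolding sym_self_polar_def by blast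
  then show ?thesis
    by (simp add: sym_polar_def)
qed

lemma sym_self_polar_omega_le:
  "sym_self_polar X \<Longrightarrow> x \<in> X \<Longrightarrow> y \<in> X \<Longrightarrow> omega x y \<le> 1"
  using sym_self_polar_mem_iff by blast

lemma sym_self_polar_uminus:
  assumes "sym_self_polar X" "y \<in> X"
  shows "- y \<in> X"
proof -
  have "omega x (- y) \<le> 1" if "x \<in> X" for x
    using sym_self_polar_omega_le[OF assms that] omega_antisym[of x y] by simp
  then show ?thesis
    using sym_self_polar_mem_iff[OF assms(1)] by blast
qed

lemma sym_self_polar_closed: "sym_self_polar X \<Longrightarrow> closed X"
  by (simp add: sym_self_polar_def convex_body_def compact_imp_closed)

lemma interior_scaleR_mem:
  fixes x :: "'a::real_normed_vector"
  assumes "x \<in> interior X"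
  shows "\<exists>e>0. (1 + e) *\<^sub>R x \<in> X"
proof -
  have "((\<lambda>e::real. (1 + e) *\<^sub>R x) \<longlongrightarrow> x) (at_right 0)"
    by (intro tendsto_eq_intros) auto
  then have "\<forall>\<^sub>F e in at_right 0. (1 + e) *\<^sub>R x \<in> interior X"
    using assms by (intro topological_tendstoD) auto
  then have "\<forall>\<^sub>F e in at_right 0. e > 0 \<and> (1 + e) *\<^sub>R x \<in> X"
    using eventually_at_right_less[of "0::real"] by eventually_elim (use interior_subset in blast)
  then show ?thesis
    using eventually_happens'[OF trivial_limit_at_right_real] by blast
qed

lemma sym_self_polar_frontier:
  assumes S: "sym_self_polar X" and "x \<in> X" "y \<in> X" "omega x y = 1"
  shows "x \<in> frontier X"
proof -
  have "x \<notin> interior X"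
  proof
    assume "x \<in> interior X"
    then obtain e where "e > 0" "(1 + e) *\<^sub>R x \<in> X"
      using interior_scaleR_mem by blast
    then show False
      using sym_self_polar_omega_le[OF S _ \<open>y \<in> X\<close>] \<open>omega x y = 1\<close> by fastforce
  qed
  then show ?thesis
    using assms(2) sym_self_polar_closed[OF S] by (simp add: frontier_def)
qed

lemma sym_self_polar_partner_exists:
  assumes S: "sym_self_polar X" and u: "u \<in> frontier X"
  shows "\<exists>y\<in>X. omega u y = 1"
proof -
  have X: "convex X" "closed X" "0 \<in> interior X"
    using S by (auto simp: sym_self_polar_def convex_body_def compact_imp_closed)
  then have ri: "rel_interior X = interior X"
    by (intro rel_interior_nonempty_interior) auto
  have "u \<in> closure X" "u \<notin> rel_interior X"
    using u X(2) ri by (auto simp: frontier_def)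
  then obtain a where a: "\<And>y. y \<in> closure X \<Longrightarrow> a \<bullet> u \<le> a \<bullet> y"
      "\<And>y. y \<in> rel_interior X \<Longrightarrow> a \<bullet> u < a \<bullet> y"
    using supporting_hyperplane_relative_frontier[OF X(1)] by blast
  have au: "a \<bullet> u < 0"
    using a(2) X(3) ri by fastforce
  define w where "w = (1 / (a \<bullet> u)) *\<^sub>R cJ a"
  have "omega y w \<le> 1" if "y \<in> X" for y
    using a(1) closure_subset that au by (force simp: w_def inner_commute divide_le_eq_1)
  then have "w \<in> X"
    using sym_self_polar_mem_iff[OF S] by blast
  moreover have "omega u w = 1"
    using au by (simp add: w_def inner_commute)
  ultimately show ?thesis by blast
qed

lemma sym_self_polar_normal:
  assumes "sym_self_polar X" "y \<in> X" "omega u y = 1"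
  shows "\<forall>x\<in>X. (- cJ y) \<bullet> (x - u) \<le> 0"
proof
  fix x
  assume "x \<in> X"
  moreover have "(- cJ y) \<bullet> (x - u) = omega x y - omega u y"
    by (simp add: inner_diff_right inner_cJ_eq_omega)
  ultimately show "(- cJ y) \<bullet> (x - u) \<le> 0"
    using assms sym_self_polar_omega_le by fastforce
qed

lemma sym_self_polar_cJ_outer_normal:
  assumes S: "sym_self_polar X" and C1: "C1_boundary X" and "u \<in> X"
    and y: "y \<in> X" "omega u y = 1"
  shows "cJ (outer_normal X u) = (1 / norm y) *\<^sub>R y"
proof -
  have "y \<noteq> 0"
    using y(2) by auto
  have "outer_normal X u = (1 / norm y) *\<^sub>R (- cJ y)"
  proof (rule outer_normal_eqI[OF C1 sym_self_polar_closed[OF S]])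
    show "u \<in> frontier X"
      using sym_self_polar_frontier assms by blast
    show "norm ((1 / norm y) *\<^sub>R (- cJ y)) = 1"
      using \<open>y \<noteq> 0\<close> by simp
    show "\<forall>x\<in>X. (1 / norm y) *\<^sub>R (- cJ y) \<bullet> (x - u) \<le> 0"
      using sym_self_polar_normal[OF S y] by (simp add: mult_nonpos_nonneg)
  qed
  then show ?thesis
    by (simp add: cJ_scaleR cJ_minus)
qed

lemma sym_self_polar_partner_unique:
  assumes S: "sym_self_polar X" and C1: "C1_boundary X" and "u \<in> X"
    and y1: "y1 \<in> X" "omega u y1 = 1" and y2: "y2 \<in> X" "omega u y2 = 1"
  shows "y1 = y2"
proof -
  have "y1 \<noteq> 0"
    using y1(2) by auto
  have "(1 / norm y1) *\<^sub>R y1 = (1 / norm y2) *\<^sub>R y2"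
    using sym_self_polar_cJ_outer_normal[OF S C1 \<open>u \<in> X\<close>] y1 y2 by metis
  then have "norm y1 *\<^sub>R ((1 / norm y1) *\<^sub>R y1) = norm y1 *\<^sub>R ((1 / norm y2) *\<^sub>R y2)"
    by simp
  then have y12: "y1 = (norm y1 / norm y2) *\<^sub>R y2"
    using \<open>y1 \<noteq> 0\<close> by simp
  then have "omega u y1 = (norm y1 / norm y2) * omega u y2"
    by (metis omega_scaleR_right)
  then have "norm y1 / norm y2 = 1"
    using y1(2) y2(2) \<open>y1 \<noteq> 0\<close> by simp
  then show ?thesis
    using y12 by (metis scaleR_one)
qed

lemma polar_map_eq:
  assumes S: "sym_self_polar X" and C1: "C1_boundary X" and "u \<in> X"
    and y: "y \<in> X" "omega u y = 1"
  shows "polar_map X u = y"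
proof -
  have "sym_polar X = X"
    using S by (simp add: sym_self_polar_def)
  then show ?thesis
    unfolding polar_map_def using sym_self_polar_partner_unique[OF assms(1-3)] y by auto
qed

lemma polar_map_partner:
  assumes "sym_self_polar X" "C1_boundary X" "u \<in> frontier X"
  shows "polar_map X u \<in> X" "omega u (polar_map X u) = 1"
  using sym_self_polar_partner_exists[OF assms(1,3)] polar_map_eq[OF assms(1,2)]
    frontier_subset_closed[OF sym_self_polar_closed[OF assms(1)]] assms(3)
  by auto

subsection \<open>The outer billiard map\<close>

definition billiard_foot :: "(complex ^ 'n) set \<Rightarrow> complex ^ 'n \<Rightarrow> complex ^ 'n \<Rightarrow> bool" where
  "billiard_foot X z x \<longleftrightarrow> x \<in> frontier X \<and>
     (\<exists>t::real. z - x = t *\<^sub>R cJ (outer_normal X x)) \<and> omega x (x - z) > 0"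

lemma outer_billiard_eq_foot: "outer_billiard X z = 2 *\<^sub>R (THE x. billiard_foot X z x) - z"
  by (simp add: outer_billiard_def billiard_foot_def)

lemma billiard_foot_iff:
  assumes S: "sym_self_polar X" and C1: "C1_boundary X"
    and p: "p \<in> X" and q: "q \<in> X" "omega p q = 1"
  shows "billiard_foot X z p \<longleftrightarrow> (\<exists>s>0. z = p - s *\<^sub>R q)"
proof -
  have "q \<noteq> 0"
    using q(2) by auto
  have "p \<in> frontier X"
    using sym_self_polar_frontier assms by blast
  moreover have "(\<exists>t. z - p = t *\<^sub>R ((1 / norm q) *\<^sub>R q)) \<and> omega p (p - z) > 0
      \<longleftrightarrow> (\<exists>s>0. z = p - s *\<^sub>R q)"
  proof
    assume "(\<exists>t. z - p = t *\<^sub>R ((1 / norm q) *\<^sub>R q)) \<and> omega p (p - z) > 0"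
    then obtain t where "z - p = t *\<^sub>R ((1 / norm q) *\<^sub>R q)" and pos: "omega p (p - z) > 0"
      by blast
    then have z: "z = p - (- t / norm q) *\<^sub>R q"
      by (simp add: algebra_simps)
    moreover have "- t / norm q > 0"
      using pos q(2) by (simp add: z)
    ultimately show "\<exists>s>0. z = p - s *\<^sub>R q"
      by blast
  next
    assume "\<exists>s>0. z = p - s *\<^sub>R q"
    then obtain s where "s > 0" and z: "z = p - s *\<^sub>R q"
      by blast
    then have "z - p = (- s * norm q) *\<^sub>R ((1 / norm q) *\<^sub>R q)" "omega p (p - z) > 0"
      using \<open>q \<noteq> 0\<close> q(2) by simp_all
    then show "(\<exists>t. z - p = t *\<^sub>R ((1 / norm q) *\<^sub>R q)) \<and> omega p (p - z) > 0"
      by blast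
  qed
  ultimately show ?thesis
    by (simp add: billiard_foot_def sym_self_polar_cJ_outer_normal[OF S C1 p q])
qed

text \<open>Writing \<open>z = p - s y = p' - s' y'\<close> with partners \<open>y, y'\<close> and \<open>s, s' > 0\<close>, the bound
  \<open>\<omega> \<le> 1\<close> forces \<open>\<omega>(y', y) = 0\<close>, so \<open>-p'\<close> and \<open>-p\<close> are both partners of \<open>y\<close>.\<close>

lemma billiard_foot_unique:
  assumes S: "sym_self_polar X" and C1: "C1_boundary X"
    and "billiard_foot X z p" "billiard_foot X z p'"
  shows "p = p'"
proof -
  have "p \<in> frontier X" "p' \<in> frontier X"
    using assms(3,4) by (simp_all add: billiard_foot_def)
  then have pX: "p \<in> X" "p' \<in> X"
    using frontier_subset_closed[OF sym_self_polar_closed[OF S]] by auto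
  obtain y y' where y: "y \<in> X" "omega p y = 1" and y': "y' \<in> X" "omega p' y' = 1"
    using polar_map_partner[OF S C1] \<open>p \<in> frontier X\<close> \<open>p' \<in> frontier X\<close> by metis
  obtain s s' where s: "s > 0" "z = p - s *\<^sub>R y" and s': "s' > 0" "z = p' - s' *\<^sub>R y'"
    using assms(3,4) billiard_foot_iff[OF S C1] pX y y' by metis
  then have p': "p' = p - s *\<^sub>R y + s' *\<^sub>R y'" and p: "p = p' - s' *\<^sub>R y' + s *\<^sub>R y"
    by (simp_all add: algebra_simps)
  have "omega p' y = 1 + s' * omega y' y"
    using y(2) by (simp add: p')
  moreover have "omega p y' = 1 + s * omega y y'"
    using y'(2) by (simp add: p)
  moreover have "omega p' y \<le> 1" "omega p y' \<le> 1"
    using sym_self_polar_omega_le[OF S] pX y y' by auto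
  ultimately have "omega y' y = 0"
    using s(1) s'(1) omega_antisym[of y' y] by (smt (verit) mult_pos_pos mult_pos_neg)
  then have "omega y (- p') = 1" "omega y (- p) = 1"
    using \<open>omega p' y = 1 + s' * omega y' y\<close> y(2) omega_antisym[of y] by auto
  then have "- p' = - p"
    using sym_self_polar_partner_unique[OF S C1 y(1)] sym_self_polar_uminus[OF S] pX by blast
  then show ?thesis
    by simp
qed

lemma outer_billiard_diff:
  assumes S: "sym_self_polar X" and C1: "C1_boundary X"
    and "p \<in> X" "q \<in> X" "omega p q = 1"
  shows "outer_billiard X (p - q) = p + q"
proof -
  have "billiard_foot X (p - q) p"
    using billiard_foot_iff[OF assms] by (metis scaleR_one zero_less_one)
  then have "(THE x. billiard_foot X (p - q) x) = p"
    using billiard_foot_unique[OF S C1] by blast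
  then show ?thesis
    by (simp add: outer_billiard_eq_foot scaleR_2)
qed

lemma sym_self_polar_diff_notin:
  assumes S: "sym_self_polar X" and C1: "C1_boundary X"
    and "p \<in> X" "q \<in> X" "omega p q = 1"
  shows "p - q \<notin> X"
proof
  assume "p - q \<in> X"
  moreover have "omega (p - q) p = 1" "omega (p - q) q = 1"
    using assms(5) omega_antisym[of q p] by simp_all
  ultimately have "p = q"
    using sym_self_polar_partner_unique[OF S C1] assms(3,4) by blast
  then show False
    using assms(5) by simp
qed

theorem theorem3p1:
  fixes X :: "(complex ^ 'n) set" and x :: "complex ^ 'n"
  assumes "sym_self_polar X"
    and "C1_boundary X"
    and "x \<in> frontier X"
  defines "z1 \<equiv> x + polar_map X x"
    and "z2 \<equiv> - x + polar_map X x"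
    and "z3 \<equiv> - x - polar_map X x"
    and "z4 \<equiv> x - polar_map X x"
  shows "z2 - z1 = z3 - z4 \<and> omega (z2 - z1) (z3 - z2) = 4
     \<and> z1 \<notin> X \<and> z2 \<notin> X \<and> z3 \<notin> X \<and> z4 \<notin> X
     \<and> outer_billiard X z1 = z2 \<and> outer_billiard X z2 = z3
     \<and> outer_billiard X z3 = z4 \<and> outer_billiard X z4 = z1"
proof -
  note S = assms(1) and C1 = assms(2)
  define f where "f = polar_map X x"
  have f: "f \<in> X" "omega x f = 1"
    using polar_map_partner[OF S C1 assms(3)] by (simp_all add: f_def)
  have "x \<in> X"
    using assms(3) frontier_subset_closed[OF sym_self_polar_closed[OF S]] by blast
  then have mem: "x \<in> X" "- x \<in> X" "f \<in> X" "- f \<in> X"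
    using f(1) sym_self_polar_uminus[OF S] by auto
  have pairs: "omega f (- x) = 1" "omega (- x) (- f) = 1" "omega (- f) x = 1" "omega x f = 1"
    using f(2) omega_antisym[of f x] by simp_all
  have step: "p - q \<notin> X \<and> outer_billiard X (p - q) = p + q"
    if "p \<in> X" "q \<in> X" "omega p q = 1" for p q
    using sym_self_polar_diff_notin[OF S C1 that] outer_billiard_diff[OF S C1 that] by blast
  have corners: "f - - x = z1" "f + - x = z2" "- x - - f = z2" "- x + - f = z3"
      "- f - x = z3" "- f + x = z4" "x - f = z4" "x + f = z1"
    by (simp_all add: z1_def z2_def z3_def z4_def f_def)
  note steps = step[OF mem(3) mem(2) pairs(1)] step[OF mem(2) mem(4) pairs(2)]
    step[OF mem(4) mem(1) pairs(3)] step[OF mem(1) mem(3) pairs(4)]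
  have "z2 - z1 = - 2 *\<^sub>R x" "z3 - z2 = - 2 *\<^sub>R f"
    by (simp_all add: z1_def z2_def f_def z3_def scaleR_2 algebra_simps)
  then have "omega (z2 - z1) (z3 - z2) = 4"
    using f(2) by simp
  moreover have "z2 - z1 = z3 - z4"
    by (simp add: z1_def z2_def z3_def z4_def)
  ultimately show ?thesis
    using steps[unfolded corners] by blast
qed

end
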